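(* Assume conditions (A) and (B) hold, and let $\epsilon>0$ be small enough that $B_\epsilon(L_0)$ and $B_\epsilon(f^{-1}(p_0))$ are disjoint from each other and from $\mathcal{I}$. Then there exists $\delta>0$ such that for all $T\in\mathcal{T}(T_0,\delta)$: (i) $f_T\big(\mathbb{P}^2\setminus (B_\epsilon(f^{-1}(p_0))\cup\mathcal I)\big)\subset B_\epsilon(L_0)$; (ii) $f_T^{-1}\big(\mathbb{P}^2\setminus B_\epsilon(L_0)\big)\subset B_\epsilon(f^{-1}(p_0))$. In particular $f_T(\mathcal{I})\subset B_\epsilon(L_0)$, and every ergodic $f_T$-invariant probability measure is supported entirely in $B_\epsilon(L_0)$ or entirely in $B_\epsilon(f^{-1}(p_0))$. If in addition condition (C) holds, then $\delta$ may be chosen so that moreover every point of $B_\epsilon(f^{-1}(p_0))$ is a regular point of $f_T$ and consequently $B_\epsilon(L_0)$ contains all critical values of $f_T$.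
   Context: $f:\mathbb{P}^2\dashrightarrow\mathbb{P}^2$ is a dominant rational map with indeterminacy set $\mathcal{I}$ (finite), topological degree $\lambda_2=\lambda_2(f)$; for $p\in\mathcal I$, $f(p)$ is the set of all limits $\lim f(p_j)$ with $p_j\to p$, and for a curve $V$, $f(V):=\overline{f(V\setminus\mathcal{I})}$. $f^{-1}(p_0)$ is the set of points $q\notin\mathcal I$ with $f(q)=p_0$. For $T\in\mathrm{Aut}(\mathbb{P}^2)$, $f_T=T\circ f$. Distances use the Fubini–Study metric and $B_r(X)=\{p:\mathrm{dist}(p,X)<r\}$. Fix a line $L_0\subset\mathbb{P}^2$, a point $p_0\notin L_0$, and a surjective linear map $T_0:\mathbb{P}^2\setminus\{p_0\}\to L_0$ (induced by a rank-2 linear map of $\mathbb{C}^3$ with kernel the line $p_0$ and image the plane $L_0$). For $\delta>0$, $\mathcal{T}(T_0,\delta):=\{T\in\mathrm{Aut}(\mathbb{P}^2):\mathrm{dist}(T(p),T_0(p))<\delta \text{ for all } p\notin B_\delta(p_0)\}$ (a nonempty open set). Conditions: (A) $p_0\notin f(\mathcal{I})\cup f(L_0)$; (B) $L_0\cap\mathcal{I}=\emptyset$; (C) $p_0$ is a regular value of $f$ with $\lambda_2$ distinct preimages; (D) $\deg f(L_0)\ge 2$. *)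

theory Defs
  imports "HOL-Analysis.Analysis" "HOL-Probability.Probability"
begin

text \<open>Concrete model of the complex projective plane: points are complex lines
in complex^3 (the span of a nonzero vector).\<close>

type_synonym vec3 = "complex^3"

definition cline :: "vec3 \<Rightarrow> vec3 set" where
  "cline v = range (\<lambda>c::complex. c *s v)"

typedef P2 = "{L. \<exists>v::vec3. v \<noteq> 0 \<and> L = cline v}"
  by (rule exI[of _ "cline (axis 1 1)"], rule CollectI, rule exI[of _ "axis 1 1"])
     (simp add: axis_eq_0_iff)

definition proj :: "vec3 \<Rightarrow> P2" where
  "proj v = Abs_P2 (cline v)"

definition rep :: "P2 \<Rightarrow> vec3" where
  "rep p = (SOME v. v \<noteq> 0 \<and> Rep_P2 p = cline v)"

definition herm :: "vec3 \<Rightarrow> vec3 \<Rightarrow> complex" where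
  "herm u v = (\<Sum>i\<in>UNIV. u $ i * cnj (v $ i))"

definition fs_dist :: "P2 \<Rightarrow> P2 \<Rightarrow> real" where
  "fs_dist p q = arccos (cmod (herm (rep p) (rep q)) / (norm (rep p) * norm (rep q)))"

definition fs_ball :: "P2 set \<Rightarrow> real \<Rightarrow> P2 set" where
  "fs_ball X r = {p. \<exists>x\<in>X. fs_dist p x < r}"

definition fs_conv :: "(nat \<Rightarrow> P2) \<Rightarrow> P2 \<Rightarrow> bool" where
  "fs_conv s p \<longleftrightarrow> ((\<lambda>j. fs_dist (s j) p) \<longlonglongrightarrow> 0)"

definition fs_open :: "P2 set \<Rightarrow> bool" where
  "fs_open U \<longleftrightarrow> (\<forall>p\<in>U. \<exists>r>0. {q. fs_dist q p < r} \<subseteq> U)"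

definition fs_closure :: "P2 set \<Rightarrow> P2 set" where
  "fs_closure A = {q. \<exists>s. (\<forall>j. s j \<in> A) \<and> fs_conv s q}"

definition fs_dense :: "P2 set \<Rightarrow> bool" where
  "fs_dense A \<longleftrightarrow> fs_closure A = UNIV"

definition hpoly :: "nat \<Rightarrow> (vec3 \<Rightarrow> complex) \<Rightarrow> bool" where
  "hpoly d P \<longleftrightarrow> (\<exists>c :: nat \<times> nat \<times> nat \<Rightarrow> complex. \<forall>x.
     P x = (\<Sum>m\<in>{m. fst m + fst (snd m) + snd (snd m) = d}.
              c m * x$1 ^ fst m * x$2 ^ fst (snd m) * x$3 ^ snd (snd m)))"

text \<open>F is a homogeneous lift of a rational self-map of P^2: three homogeneous
polynomials of a common degree without a common nonconstant factor.\<close>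
definition rat_map :: "(vec3 \<Rightarrow> vec3) \<Rightarrow> bool" where
  "rat_map F \<longleftrightarrow> (\<exists>d. (\<forall>i. hpoly d (\<lambda>x. F x $ i)) \<and>
     \<not> (\<exists>e G H. 1 \<le> e \<and> e \<le> d \<and> hpoly e G \<and> (\<forall>i. hpoly (d - e) (H i)) \<and>
            (\<forall>x i. F x $ i = G x * H i x)))"

definition indet :: "(vec3 \<Rightarrow> vec3) \<Rightarrow> P2 set" where
  "indet F = {proj v | v. v \<noteq> 0 \<and> F v = 0}"

definition fmap :: "(vec3 \<Rightarrow> vec3) \<Rightarrow> P2 \<Rightarrow> P2" where
  "fmap F p = proj (F (rep p))"

definition preim :: "(vec3 \<Rightarrow> vec3) \<Rightarrow> P2 \<Rightarrow> P2 set" where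
  "preim F q = {p. p \<notin> indet F \<and> fmap F p = q}"

text \<open>\<open>f(p)\<close> for an indeterminacy point p: all limits of \<open>f(p_j)\<close>, \<open>p_j \<rightarrow> p\<close>.\<close>
definition limset :: "(vec3 \<Rightarrow> vec3) \<Rightarrow> P2 \<Rightarrow> P2 set" where
  "limset F p = {q. \<exists>s. (\<forall>j. s j \<notin> indet F) \<and> fs_conv s p \<and> fs_conv (\<lambda>j. fmap F (s j)) q}"

definition img_indet :: "(vec3 \<Rightarrow> vec3) \<Rightarrow> P2 set" where
  "img_indet F = (\<Union>p\<in>indet F. limset F p)"

definition img_curve :: "(vec3 \<Rightarrow> vec3) \<Rightarrow> P2 set \<Rightarrow> P2 set" where
  "img_curve F V = fs_closure (fmap F ` (V - indet F))"

definition dominant :: "(vec3 \<Rightarrow> vec3) \<Rightarrow> bool" where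
  "dominant F \<longleftrightarrow> fs_dense (fmap F ` (UNIV - indet F))"

definition top_degree :: "(vec3 \<Rightarrow> vec3) \<Rightarrow> nat" where
  "top_degree F = (THE n. \<exists>U. fs_open U \<and> fs_dense U \<and>
      (\<forall>q\<in>U. finite (preim F q) \<and> card (preim F q) = n))"

definition jac :: "(vec3 \<Rightarrow> vec3) \<Rightarrow> vec3 \<Rightarrow> complex" where
  "jac F v = det (\<chi> i j. deriv (\<lambda>t. F (v + t *s axis j 1) $ i) 0)"

definition regular_pt :: "(vec3 \<Rightarrow> vec3) \<Rightarrow> P2 \<Rightarrow> bool" where
  "regular_pt F p \<longleftrightarrow> p \<notin> indet F \<and> jac F (rep p) \<noteq> 0"

definition regular_value :: "(vec3 \<Rightarrow> vec3) \<Rightarrow> P2 \<Rightarrow> bool" where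
  "regular_value F q \<longleftrightarrow> (\<forall>p\<in>preim F q. regular_pt F p)"

definition critical_values :: "(vec3 \<Rightarrow> vec3) \<Rightarrow> P2 set" where
  "critical_values F = {fmap F p | p. p \<notin> indet F \<and> \<not> regular_pt F p}"

definition pline :: "vec3 \<Rightarrow> P2 set" where
  "pline a = {p. (\<Sum>i\<in>UNIV. a $ i * rep p $ i) = 0}"

definition autP :: "complex^3^3 \<Rightarrow> P2 \<Rightarrow> P2" where
  "autP M p = proj (M *v rep p)"

definition compT :: "complex^3^3 \<Rightarrow> (vec3 \<Rightarrow> vec3) \<Rightarrow> (vec3 \<Rightarrow> vec3)" where
  "compT M F = (\<lambda>v. M *v F v)"

text \<open>\<open>\<T>(T_0,\<delta>)\<close>, with \<open>T_0 = [A]\<close>, \<open>p_0 = [v_0]\<close>, expressed via matrices of the automorphisms.\<close>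
definition Tset :: "complex^3^3 \<Rightarrow> vec3 \<Rightarrow> real \<Rightarrow> (complex^3^3) set" where
  "Tset A v0 \<delta> = {M. invertible M \<and>
     (\<forall>p. \<delta> \<le> fs_dist p (proj v0) \<longrightarrow> fs_dist (autP M p) (proj (A *v rep p)) < \<delta>)}"

definition fs_borel :: "P2 measure" where
  "fs_borel = sigma UNIV {U. fs_open U}"

definition erg_inv :: "(vec3 \<Rightarrow> vec3) \<Rightarrow> P2 measure \<Rightarrow> bool" where
  "erg_inv F \<mu> \<longleftrightarrow> prob_space \<mu> \<and> sets \<mu> = sets fs_borel \<and>
     indet F \<in> sets \<mu> \<and> emeasure \<mu> (indet F) = 0 \<and>
     (\<forall>A\<in>sets \<mu>. {p. p \<notin> indet F \<and> fmap F p \<in> A} \<in> sets \<mu> \<and>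
        emeasure \<mu> {p. p \<notin> indet F \<and> fmap F p \<in> A} = emeasure \<mu> A) \<and>
     (\<forall>A\<in>sets \<mu>.
        emeasure \<mu> (({p. p \<notin> indet F \<and> fmap F p \<in> A} - A) \<union> (A - {p. p \<notin> indet F \<and> fmap F p \<in> A})) = 0
        \<longrightarrow> emeasure \<mu> A = 0 \<or> emeasure \<mu> A = 1)"

end

theory Submission
  imports Defs
begin

text \<open>By compactness of \<open>\<P>\<^sup>2\<close> and because \<open>p\<^sub>0\<close> is not a limit of \<open>f\<close> at an
  indeterminacy point, \<open>f\<close> keeps every point outside \<open>B\<^sub>r(f\<^sup>-\<^sup>1(p\<^sub>0))\<close> a definite distance
  \<open>\<eta>\<close> away from \<open>p\<^sub>0\<close>. An automorphism \<open>\<delta>\<close>-close to the projection \<open>T\<^sub>0\<close> moves every point at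
  distance \<open>\<ge> \<delta>\<close> from \<open>p\<^sub>0\<close> to within \<open>\<delta>\<close> of \<open>L\<^sub>0\<close>, so for \<open>\<delta> \<le> \<eta>\<close> the map \<open>f\<^sub>T\<close> sends the
  complement of the neighbourhood of the fibre into the neighbourhood of \<open>L\<^sub>0\<close>; this gives (i), (ii)
  and, by passing to limits, the bound on \<open>f\<^sub>T(\<I>)\<close>. The neighbourhood of \<open>L\<^sub>0\<close> is then forward
  invariant, so an ergodic measure gives it mass \<open>0\<close> or \<open>1\<close>, and mass \<open>0\<close> forces full mass on the
  fibre side. Finally \<open>Jac(f\<^sub>T) = det T \<cdot> Jac(f)\<close>, and \<open>Jac(f)\<close> does not vanish near the finitely
  many regular preimages of \<open>p\<^sub>0\<close>.\<close>

lemma cline_smult: "(c::complex) \<noteq> 0 \<Longrightarrow> cline (c *s v) = cline v"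
proof -
  assume c: "c \<noteq> 0"
  have "range (\<lambda>k. k *s (c *s v)) = range (\<lambda>k. k *s v)"
  proof (intro set_eqI iffI)
    fix x assume "x \<in> range (\<lambda>k. k *s (c *s v))"
    then obtain k where "x = (k * c) *s v" by (auto simp: vector_smult_assoc)
    then show "x \<in> range (\<lambda>k. k *s v)" by blast
  next
    fix x assume "x \<in> range (\<lambda>k. k *s v)"
    then obtain k where "x = (k / c) *s (c *s v)" using c by (auto simp: vector_smult_assoc)
    then show "x \<in> range (\<lambda>k. k *s (c *s v))" by blast
  qed
  then show ?thesis by (simp add: cline_def)
qed

lemma rep_spec: "rep p \<noteq> 0 \<and> Rep_P2 p = cline (rep p)"
proof -
  have "\<exists>v. v \<noteq> 0 \<and> Rep_P2 p = cline v" using Rep_P2[of p] by auto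
  then show ?thesis unfolding rep_def by (rule someI_ex)
qed

lemma rep_nonzero [simp]: "rep p \<noteq> 0"
  using rep_spec by blast

lemma proj_rep [simp]: "proj (rep p) = p"
  unfolding proj_def using rep_spec[of p] by (metis Rep_P2_inverse)

lemma cline_eq_imp_smult:
  assumes "v \<noteq> 0" "cline v = cline w" shows "\<exists>c. c \<noteq> 0 \<and> v = c *s w"
proof -
  have "v \<in> cline v" unfolding cline_def by (auto intro: range_eqI[of _ _ 1])
  then obtain c where "v = c *s w" using assms(2) unfolding cline_def by auto
  then show ?thesis using assms(1) by auto
qed

lemma Rep_P2_proj: "v \<noteq> 0 \<Longrightarrow> Rep_P2 (proj v) = cline v"
  unfolding proj_def by (rule Abs_P2_inverse) auto

lemma rep_proj_smult: assumes "v \<noteq> 0" shows "\<exists>c. c \<noteq> 0 \<and> rep (proj v) = c *s v"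
proof -
  have "cline (rep (proj v)) = cline v"
    using rep_spec[of "proj v"] Rep_P2_proj[OF assms] by simp
  then show ?thesis using cline_eq_imp_smult rep_nonzero by blast
qed

lemma proj_smult: "(c::complex) \<noteq> 0 \<Longrightarrow> proj (c *s v) = proj v"
  unfolding proj_def by (simp add: cline_smult)

lemma proj_eq_iff:
  assumes "v \<noteq> 0" "w \<noteq> 0"
  shows "proj v = proj w \<longleftrightarrow> (\<exists>c. c \<noteq> 0 \<and> v = c *s w)"
proof
  assume "proj v = proj w"
  then have "cline v = cline w" using arg_cong[of _ _ Rep_P2] Rep_P2_proj assms by metis
  then show "\<exists>c. c \<noteq> 0 \<and> v = c *s w" using cline_eq_imp_smult assms by blast
qed (use proj_smult in auto)

lemma eq_smult_rep_if_proj_eq: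
  assumes "v \<noteq> 0" "proj v = p" shows "\<exists>c. c \<noteq> 0 \<and> v = c *s rep p"
  using proj_eq_iff[OF assms(1) rep_nonzero[of p]] assms by simp

subsection \<open>The Fubini--Study distance\<close>

lemma herm_smult_left: "herm (c *s u) v = c * herm u v"
  by (simp add: herm_def sum_distrib_left mult.assoc)

lemma herm_smult_right: "herm u (c *s v) = cnj c * herm u v"
  by (simp add: herm_def sum_distrib_left algebra_simps)

lemma herm_diff_left: "herm (u - w) v = herm u v - herm w v"
  by (simp add: herm_def sum_subtractf algebra_simps)

lemma herm_diff_right: "herm u (v - w) = herm u v - herm u w"
  by (simp add: herm_def sum_subtractf algebra_simps)

lemma herm_sym: "herm v u = cnj (herm u v)"
  by (simp add: herm_def mult.commute)

lemma herm_self: "herm u u = complex_of_real ((norm u)\<^sup>2)"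
proof -
  have "(norm u)\<^sup>2 = (\<Sum>i\<in>UNIV. (cmod (u$i))\<^sup>2)"
    by (simp add: norm_vec_def L2_set_def sum_nonneg)
  then have "complex_of_real ((norm u)\<^sup>2) = (\<Sum>i\<in>UNIV. complex_of_real ((cmod (u$i))\<^sup>2))"
    by simp
  also have "\<dots> = herm u u" unfolding herm_def complex_norm_square ..
  finally show ?thesis by simp
qed

lemma Re_herm_eq_inner: "Re (herm u v) = inner u v"
  by (simp add: herm_def inner_vec_def inner_complex_def Re_sum)

lemma norm_vector_smult: "norm (c *s (u::vec3)) = cmod c * norm u"
proof -
  have "complex_of_real ((norm (c *s u))\<^sup>2) = herm (c *s u) (c *s u)"
    by (rule herm_self[symmetric])
  also have "\<dots> = (c * cnj c) * herm u u"
    by (simp add: herm_smult_left herm_smult_right mult.assoc)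
  also have "\<dots> = complex_of_real ((cmod c * norm u)\<^sup>2)"
    by (simp only: herm_self complex_norm_square of_real_mult power_mult_distrib)
  finally have "(norm (c *s u))\<^sup>2 = (cmod c * norm u)\<^sup>2" using of_real_eq_iff by blast
  then show ?thesis by (simp add: power2_eq_iff_nonneg)
qed

lemma scaleR_eq_vector_smult: "r *\<^sub>R (v::vec3) = complex_of_real r *s v"
  unfolding vec_eq_iff by (auto simp: scaleR_conv_of_real[where 'a=complex])

lemma norm_phase: "h \<noteq> 0 \<Longrightarrow> cmod (cnj h / complex_of_real (cmod h)) = 1"
  by (simp add: norm_divide)

lemma herm_phase_rotate:
  "herm ((cnj (herm u v) / complex_of_real (cmod (herm u v))) *s u) v
     = complex_of_real (cmod (herm u v))"
proof (cases "herm u v = 0")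
  case False
  have "cnj (herm u v) * herm u v = complex_of_real ((cmod (herm u v))\<^sup>2)"
    by (simp only: complex_norm_square mult.commute)
  then show ?thesis using False by (simp add: herm_smult_left power2_eq_square)
qed (simp add: herm_def)

text \<open>Rotating \<open>u\<close> by a phase makes \<open>herm u v\<close> real, reducing the Hermitian
  Cauchy--Schwarz inequality and its equality case to the real ones.\<close>

lemma norm_herm_le: "cmod (herm u v) \<le> norm u * norm v"
proof (cases "herm u v = 0")
  case False
  define l where "l = cnj (herm u v) / complex_of_real (cmod (herm u v))"
  have "cmod (herm u v) = inner (l *s u) v"
    using herm_phase_rotate[of u v] Re_herm_eq_inner unfolding l_def by (metis Re_complex_of_real)
  also have "\<dots> \<le> norm (l *s u) * norm v" by (rule norm_cauchy_schwarz)
  also have "\<dots> = norm u * norm v"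
    using norm_phase[OF False] by (simp add: norm_vector_smult l_def)
  finally show ?thesis .
qed simp

lemma smult_if_norm_herm_eq:
  assumes "cmod (herm u v) = norm u * norm v" "v \<noteq> 0"
  shows "\<exists>c. u = c *s v"
proof (cases "herm u v = 0")
  case True
  then show ?thesis using assms by (intro exI[of _ 0]) simp
next
  case False
  define l where "l = cnj (herm u v) / complex_of_real (cmod (herm u v))"
  have cl: "cmod l = 1" using norm_phase[OF False] unfolding l_def .
  have "cmod (herm u v) = inner (l *s u) v"
    using herm_phase_rotate[of u v] Re_herm_eq_inner unfolding l_def by (metis Re_complex_of_real)
  then have "inner (l *s u) v = norm (l *s u) * norm v"
    using assms by (simp add: norm_vector_smult cl)
  then have e: "norm (l *s u) *\<^sub>R v = norm v *\<^sub>R (l *s u)" using norm_cauchy_schwarz_eq by blast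
  have "l *s u = (1 / norm v) *\<^sub>R (norm v *\<^sub>R (l *s u))" using assms(2) by simp
  also have "\<dots> = (norm u / norm v) *\<^sub>R v" unfolding e[symmetric] by (simp add: norm_vector_smult cl)
  finally have "l *s u = complex_of_real (norm u / norm v) *s v"
    by (simp add: scaleR_eq_vector_smult)
  then have "u = (inverse l * complex_of_real (norm u / norm v)) *s v"
    using cl by (metis vector_smult_assoc vector_smult_lid left_inverse norm_zero zero_neq_one)
  then show ?thesis by blast
qed

definition fs_cos :: "vec3 \<Rightarrow> vec3 \<Rightarrow> real" where
  "fs_cos u v = cmod (herm u v) / (norm u * norm v)"

lemma fs_cos_bounds: "0 \<le> fs_cos u v" "fs_cos u v \<le> 1"
  using norm_herm_le[of u v] unfolding fs_cos_def
  by (cases "norm u * norm v = 0"; simp add: divide_le_eq_1)+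

lemma fs_cos_smult: "c \<noteq> 0 \<Longrightarrow> k \<noteq> 0 \<Longrightarrow> fs_cos (c *s u) (k *s v) = fs_cos u v"
  unfolding fs_cos_def by (simp add: herm_smult_left herm_smult_right norm_vector_smult norm_mult)

lemma fs_cos_sym: "fs_cos u v = fs_cos v u"
  unfolding fs_cos_def by (simp add: herm_sym[of u v] mult.commute)

lemma fs_cos_self: "v \<noteq> 0 \<Longrightarrow> fs_cos v v = 1"
  unfolding fs_cos_def herm_self norm_of_real by (simp add: power2_eq_square)

lemma fs_dist_eq_arccos: "fs_dist p q = arccos (fs_cos (rep p) (rep q))"
  unfolding fs_dist_def fs_cos_def ..

lemma cos_fs_dist: "cos (fs_dist p q) = fs_cos (rep p) (rep q)"
  unfolding fs_dist_eq_arccos using fs_cos_bounds[of "rep p" "rep q"] by (intro cos_arccos) auto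

lemma fs_dist_proj:
  assumes "u \<noteq> 0" "v \<noteq> 0"
  shows "fs_dist (proj u) (proj v) = arccos (fs_cos u v)"
proof -
  obtain c where c: "c \<noteq> 0" "rep (proj u) = c *s u" using rep_proj_smult[OF assms(1)] by blast
  obtain k where k: "k \<noteq> 0" "rep (proj v) = k *s v" using rep_proj_smult[OF assms(2)] by blast
  show ?thesis unfolding fs_dist_eq_arccos c k fs_cos_smult[OF c(1) k(1)] ..
qed

lemma fs_dist_nonneg: "0 \<le> fs_dist p q"
  unfolding fs_dist_eq_arccos using fs_cos_bounds[of "rep p" "rep q"] by (intro arccos_lbound) auto

lemma fs_dist_sym: "fs_dist p q = fs_dist q p"
  unfolding fs_dist_eq_arccos by (simp add: fs_cos_sym)

lemma fs_dist_self [simp]: "fs_dist p p = 0"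
  unfolding fs_dist_eq_arccos by (simp add: fs_cos_self)

lemma fs_dist_eq_0_imp_eq: assumes "fs_dist p q = 0" shows "p = q"
proof -
  have "fs_cos (rep p) (rep q) = 1" using cos_fs_dist[of p q] assms by simp
  then have "cmod (herm (rep p) (rep q)) = norm (rep p) * norm (rep q)"
    unfolding fs_cos_def by (simp add: divide_eq_1_iff)
  then obtain c where c: "rep p = c *s rep q" using smult_if_norm_herm_eq rep_nonzero by blast
  then have "c \<noteq> 0" using rep_nonzero[of p] by auto
  then have "proj (rep p) = proj (rep q)" using c proj_smult by simp
  then show ?thesis by simp
qed

text \<open>Split \<open>u\<close> and \<open>w\<close> into their components along \<open>v\<close> and orthogonal to it; this is
  the spherical law of cosines behind the triangle inequality.\<close>

lemma herm_cos_triangle: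
  assumes nu: "norm u = 1" and nv: "norm v = 1" and nw: "norm w = 1"
  shows "cmod (herm u v) * cmod (herm v w)
     - sqrt (1 - (cmod (herm u v))\<^sup>2) * sqrt (1 - (cmod (herm v w))\<^sup>2) \<le> cmod (herm u w)"
proof -
  define a where "a = herm u v"
  define b where "b = herm w v"
  define x where "x = u - a *s v"
  define y where "y = w - b *s v"
  have hvv: "herm v v = 1" and huu: "herm u u = 1" and hww: "herm w w = 1"
    using nu nv nw by (simp_all add: herm_self)
  have cb: "cnj b = herm v w" unfolding b_def using herm_sym[of v w] by simp
  have ca: "cnj a = herm v u" unfolding a_def using herm_sym[of u v] by simp
  have hxy: "herm x y = herm u w - a * herm v w"
    unfolding x_def y_def herm_diff_left herm_diff_right herm_smult_left herm_smult_right
    by (simp add: cb hvv a_def algebra_simps)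
  have "herm x x = complex_of_real (1 - (cmod a)\<^sup>2)"
    unfolding x_def herm_diff_left herm_diff_right herm_smult_left herm_smult_right
    by (simp add: ca hvv huu a_def algebra_simps complex_norm_square[symmetric] herm_sym[of v u])
  then have nx: "norm x = sqrt (1 - (cmod a)\<^sup>2)"
    using herm_self[of x] of_real_eq_iff norm_ge_zero real_sqrt_unique by metis
  have "herm y y = complex_of_real (1 - (cmod b)\<^sup>2)"
    unfolding y_def herm_diff_left herm_diff_right herm_smult_left herm_smult_right
    by (simp add: cb hvv hww b_def algebra_simps complex_norm_square[symmetric] herm_sym[of v w])
  then have ny: "norm y = sqrt (1 - (cmod b)\<^sup>2)"
    using herm_self[of y] of_real_eq_iff norm_ge_zero real_sqrt_unique by metis
  have cbv: "cmod (herm v w) = cmod b" using cb by (metis complex_mod_cnj)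
  have "cmod (a * herm v w) \<le> cmod (herm u w) + cmod (herm x y)"
    unfolding hxy by (metis norm_triangle_ineq4 norm_minus_commute add.commute diff_add_cancel
        add_diff_cancel_left' norm_triangle_sub)
  moreover have "cmod (herm x y) \<le> norm x * norm y" by (rule norm_herm_le)
  ultimately show ?thesis
    unfolding nx ny a_def[symmetric] cbv using norm_mult[of a "herm v w"] cbv
    by (simp add: b_def[symmetric])
qed

lemma unit_rep_exists: "\<exists>u. norm u = 1 \<and> proj u = p"
proof -
  let ?u = "complex_of_real (1 / norm (rep p)) *s rep p"
  have "norm ?u = 1" by (simp add: norm_vector_smult norm_divide)
  moreover have "proj ?u = p" by (simp add: proj_smult)
  ultimately show ?thesis by blast
qed

lemma fs_dist_triangle: "fs_dist p r \<le> fs_dist p q + fs_dist q r"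
proof -
  obtain u where u: "norm u = 1" "proj u = p" using unit_rep_exists by blast
  obtain v where v: "norm v = 1" "proj v = q" using unit_rep_exists by blast
  obtain w where w: "norm w = 1" "proj w = r" using unit_rep_exists by blast
  define A where "A = cmod (herm u v)"
  define B where "B = cmod (herm v w)"
  define C where "C = cmod (herm u w)"
  have A: "0 \<le> A" "A \<le> 1" unfolding A_def using norm_herm_le[of u v] u v by auto
  have B: "0 \<le> B" "B \<le> 1" unfolding B_def using norm_herm_le[of v w] v w by auto
  have C: "0 \<le> C" "C \<le> 1" unfolding C_def using norm_herm_le[of u w] u w by auto
  have dist_unit: "fs_dist (proj x) (proj y) = arccos (cmod (herm x y))"
    if "norm x = 1" "norm y = 1" for x y
    using fs_dist_proj[of x y] that unfolding fs_cos_def by fastforce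
  have dpq: "fs_dist p q = arccos A" and dqr: "fs_dist q r = arccos B"
    and dpr: "fs_dist p r = arccos C"
    unfolding A_def B_def C_def using dist_unit u v w by auto
  have "cos (arccos A + arccos B) = A * B - sqrt (1 - A\<^sup>2) * sqrt (1 - B\<^sup>2)"
    using A B by (simp add: cos_add sin_arccos)
  also have "\<dots> \<le> C"
    unfolding A_def B_def C_def by (rule herm_cos_triangle[OF u(1) v(1) w(1)])
  finally have "cos (arccos A + arccos B) \<le> C" .
  then have "arccos C \<le> arccos (cos (arccos A + arccos B))"
    using C by (intro arccos_le_arccos) auto
  moreover have "arccos (cos (arccos A + arccos B)) = arccos A + arccos B"
    if "arccos A + arccos B \<le> pi"
    using that A B arccos_lbound[of A] arccos_lbound[of B] by (intro arccos_cos) auto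
  ultimately show ?thesis
    unfolding dpq dqr dpr using arccos_ubound[of C] C by (cases "arccos A + arccos B \<le> pi") auto
qed

subsection \<open>Convergence and compactness\<close>

lemma fs_conv_subseq: "fs_conv s p \<Longrightarrow> strict_mono r \<Longrightarrow> fs_conv (s \<circ> r) p"
  unfolding fs_conv_def using LIMSEQ_subseq_LIMSEQ by (fastforce simp: o_def)

lemma fs_conv_if_dist_lt_inverse: "(\<And>n. fs_dist (s n) p < inverse (real (Suc n))) \<Longrightarrow> fs_conv s p"
  unfolding fs_conv_def
  by (rule real_tendsto_sandwich[OF _ _ tendsto_const LIMSEQ_inverse_real_of_nat])
     (auto simp: fs_dist_nonneg less_imp_le)

lemma fs_conv_eventually_lt: assumes "fs_conv s p" "r > 0" shows "\<exists>N. \<forall>n\<ge>N. fs_dist (s n) p < r"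
  using LIMSEQ_D[OF assms(1)[unfolded fs_conv_def] assms(2)] by (simp add: fs_dist_nonneg)

lemma fs_conv_unique: assumes "fs_conv s p" "fs_conv s q" shows "p = q"
proof -
  have "(\<lambda>n. fs_dist (s n) p + fs_dist (s n) q) \<longlonglongrightarrow> 0 + 0"
    using assms unfolding fs_conv_def by (rule tendsto_add)
  moreover have "\<forall>n. fs_dist p q \<le> fs_dist (s n) p + fs_dist (s n) q"
    using fs_dist_triangle fs_dist_sym by metis
  ultimately have "fs_dist p q \<le> 0" by (intro LIMSEQ_le_const) auto
  then show ?thesis using fs_dist_nonneg fs_dist_eq_0_imp_eq by (metis order.antisym)
qed

lemma tendsto_herm: "w \<longlonglongrightarrow> a \<Longrightarrow> (\<lambda>j. herm (w j) b) \<longlonglongrightarrow> herm a b"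
  unfolding herm_def by (intro tendsto_intros tendsto_vec_nth)

lemma fs_conv_proj:
  assumes nz: "\<And>j. w j \<noteq> 0" and lim: "w \<longlonglongrightarrow> w0" and w0: "w0 \<noteq> 0"
  shows "fs_conv (\<lambda>j. proj (w j)) (proj w0)"
proof -
  have "(\<lambda>j. fs_cos (w j) w0) \<longlonglongrightarrow> fs_cos w0 w0"
    unfolding fs_cos_def using w0 by (intro tendsto_intros tendsto_herm lim) auto
  then have "(\<lambda>j. fs_cos (w j) w0) \<longlonglongrightarrow> 1" using fs_cos_self[OF w0] by simp
  then have "(\<lambda>j. arccos (fs_cos (w j) w0)) \<longlonglongrightarrow> arccos 1"
    by (rule continuous_on_tendsto_compose[OF continuous_on_arccos'])
       (use fs_cos_bounds in \<open>auto intro!: always_eventually order_trans[OF _ fs_cos_bounds(1)]\<close>)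
  then show ?thesis unfolding fs_conv_def fs_dist_proj[OF nz w0] by simp
qed

text \<open>Lifting a convergent sequence of points: rescale the representatives to the
  norm of \<open>rep p\<close> and rotate their phase so that the Hermitian product with \<open>rep p\<close>
  is real and nonnegative; then \<open>norm (w j - rep p)\<close> is controlled by \<open>fs_dist (s j) p\<close>.\<close>

lemma norm_diff_phase_aligned:
  assumes "norm w = norm u" and "herm w u = complex_of_real (norm u * norm u * fs_cos v u)"
  shows "(norm (w - u))\<^sup>2 = 2 * (norm u)\<^sup>2 * (1 - fs_cos v u)"
proof -
  have "complex_of_real ((norm (w - u))\<^sup>2) = herm (w - u) (w - u)" by (simp add: herm_self)
  also have "\<dots> = herm w w - herm w u - cnj (herm w u) + herm u u"
    by (simp add: herm_diff_left herm_diff_right herm_sym[of w u])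
  also have "\<dots> = complex_of_real (2 * (norm u)\<^sup>2 * (1 - fs_cos v u))"
    unfolding assms(2) herm_self assms(1) by (simp add: algebra_simps power2_eq_square)
  finally show ?thesis using of_real_eq_iff by blast
qed

lemma fs_conv_lift_reps:
  assumes "fs_conv s p"
  shows "\<exists>w. (\<forall>j. w j \<noteq> 0) \<and> (\<forall>j. proj (w j) = s j) \<and> w \<longlonglongrightarrow> rep p"
proof -
  define u where "u = rep p"
  define N where "N = norm u"
  have N: "N > 0" unfolding N_def u_def by simp
  define h where "h j = herm (rep (s j)) u" for j
  define l where "l j = (if h j = 0 then 1 else cnj (h j) / complex_of_real (cmod (h j)))" for j
  define w where "w j = (complex_of_real (N / norm (rep (s j))) * l j) *s rep (s j)" for j
  have cl: "cmod (l j) = 1" for j unfolding l_def using norm_phase by auto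
  have nw: "norm (w j) = N" for j
    unfolding w_def norm_vector_smult norm_mult cl using N by (simp add: norm_divide)
  have wnz: "w j \<noteq> 0" for j using nw[of j] N by auto
  have pw: "proj (w j) = s j" for j
    unfolding w_def using cl[of j] N by (subst proj_smult) (auto simp: norm_mult)
  have lh: "l j * h j = complex_of_real (cmod (h j))" for j
    using herm_phase_rotate[of "rep (s j)" u] unfolding l_def h_def
    by (auto simp: herm_smult_left)
  have "herm (w j) u = complex_of_real (N * N * fs_cos (rep (s j)) u)" for j
  proof -
    have "herm (w j) u = complex_of_real (N / norm (rep (s j)) * cmod (h j))"
      unfolding w_def herm_smult_left h_def[symmetric] by (simp add: mult.assoc lh)
    also have "N / norm (rep (s j)) * cmod (h j) = N * N * fs_cos (rep (s j)) u"
      unfolding fs_cos_def h_def N_def using N by (simp add: field_simps N_def)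
    finally show ?thesis .
  qed
  then have nd: "norm (w j - u) = sqrt (2 * N\<^sup>2 * (1 - cos (fs_dist (s j) p)))" for j
    using norm_diff_phase_aligned[of "w j" u "rep (s j)"] nw
    unfolding cos_fs_dist u_def N_def by (metis norm_ge_zero real_sqrt_unique)
  have "(\<lambda>j. sqrt (2 * N\<^sup>2 * (1 - cos (fs_dist (s j) p)))) \<longlonglongrightarrow> sqrt (2 * N\<^sup>2 * (1 - cos 0))"
    using assms unfolding fs_conv_def by (intro tendsto_intros)
  then have "(\<lambda>j. norm (w j - u)) \<longlonglongrightarrow> 0" unfolding nd by simp
  then have "w \<longlonglongrightarrow> u" using tendsto_norm_zero_iff Lim_null by blast
  then show ?thesis using wnz pw u_def by blast
qed

lemma fs_seq_compact: fixes s :: "nat \<Rightarrow> P2" shows "\<exists>r p. strict_mono r \<and> fs_conv (s \<circ> r) p"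
proof -
  define u where "u j = complex_of_real (1 / norm (rep (s j))) *s rep (s j)" for j
  have nu: "norm (u j) = 1" for j unfolding u_def by (simp add: norm_vector_smult norm_divide)
  have pu: "proj (u j) = s j" for j unfolding u_def by (simp add: proj_smult)
  have "seq_compact (sphere (0::vec3) 1)" by (intro compact_imp_seq_compact compact_sphere)
  moreover have "\<forall>n. u n \<in> sphere 0 1" using nu by simp
  ultimately obtain l r where l: "l \<in> sphere 0 1" "strict_mono r" "(u \<circ> r) \<longlonglongrightarrow> l"
    by (rule seq_compactE)
  have "fs_conv (\<lambda>j. proj ((u \<circ> r) j)) (proj l)"
  proof (rule fs_conv_proj[OF _ l(3)])
    show "(u \<circ> r) j \<noteq> 0" for j using nu[of "r j"] by auto
    show "l \<noteq> 0" using l(1) by auto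
  qed
  then have "fs_conv (s \<circ> r) (proj l)" by (simp add: o_def pu)
  then show ?thesis using l by blast
qed

lemma fs_ball_memI: "x \<in> X \<Longrightarrow> r > 0 \<Longrightarrow> x \<in> fs_ball X r"
  unfolding fs_ball_def by force

lemma fs_ball_mono: "r \<le> r' \<Longrightarrow> fs_ball X r \<subseteq> fs_ball X r'"
  unfolding fs_ball_def by force

lemma fs_ball_nbhd:
  assumes "p \<in> fs_ball X r" shows "\<exists>\<rho>>0. \<forall>q. fs_dist q p < \<rho> \<longrightarrow> q \<in> fs_ball X r"
proof -
  obtain x where x: "x \<in> X" "fs_dist p x < r" using assms unfolding fs_ball_def by blast
  have "q \<in> fs_ball X r" if "fs_dist q p < r - fs_dist p x" for q
    using that x fs_dist_triangle[of q x p] unfolding fs_ball_def by force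
  then show ?thesis using x by (intro exI[of _ "r - fs_dist p x"]) auto
qed

lemma fs_open_fs_ball: "fs_open (fs_ball X r)"
  unfolding fs_open_def using fs_ball_nbhd by blast

lemma fs_conv_eventually_in_fs_ball:
  assumes "p \<in> fs_ball X r" "fs_conv s p" shows "\<exists>N. \<forall>n\<ge>N. s n \<in> fs_ball X r"
proof -
  obtain \<rho> where "\<rho> > 0" "\<forall>q. fs_dist q p < \<rho> \<longrightarrow> q \<in> fs_ball X r"
    using fs_ball_nbhd[OF assms(1)] by blast
  then show ?thesis using fs_conv_eventually_lt[OF assms(2)] by blast
qed

subsection \<open>Homogeneous polynomial maps and their Jacobian\<close>

definition monom3 :: "nat \<times> nat \<times> nat \<Rightarrow> vec3 \<Rightarrow> complex" where
  "monom3 m x = x$1 ^ fst m * x$2 ^ fst (snd m) * x$3 ^ snd (snd m)"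

definition exps_deg :: "nat \<Rightarrow> (nat \<times> nat \<times> nat) set" where
  "exps_deg d = {m. fst m + fst (snd m) + snd (snd m) = d}"

definition polyrep :: "nat \<Rightarrow> (3 \<Rightarrow> nat \<times> nat \<times> nat \<Rightarrow> complex) \<Rightarrow> (vec3 \<Rightarrow> vec3) \<Rightarrow> bool" where
  "polyrep d C F \<longleftrightarrow> (\<forall>i x. F x $ i = (\<Sum>m\<in>exps_deg d. C i m * monom3 m x))"

lemma polyrep_of_rat_map: assumes "rat_map F" shows "\<exists>d C. polyrep d C F"
proof -
  obtain d where d: "\<forall>i. hpoly d (\<lambda>x. F x $ i)" using assms unfolding rat_map_def by blast
  then have "\<forall>i. \<exists>c. \<forall>x. F x $ i = (\<Sum>m\<in>exps_deg d. c m * monom3 m x)"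
    unfolding hpoly_def exps_deg_def monom3_def mult.assoc by blast
  then obtain C where "\<forall>i. \<forall>x. F x $ i = (\<Sum>m\<in>exps_deg d. C i m * monom3 m x)" by metis
  then show ?thesis unfolding polyrep_def by blast
qed

lemma monom3_smult: "monom3 m (c *s x) = c ^ (fst m + fst (snd m) + snd (snd m)) * monom3 m x"
  unfolding monom3_def by (simp add: power_add power_mult_distrib)

lemma polyrep_homogeneous: assumes "polyrep d C F" shows "F (c *s x) = c ^ d *s F x"
proof -
  have "F (c *s x) $ i = (c ^ d *s F x) $ i" for i
  proof -
    have "F (c *s x) $ i = (\<Sum>m\<in>exps_deg d. C i m * (c^d * monom3 m x))"
      using assms unfolding polyrep_def by (simp add: monom3_smult exps_deg_def)
    also have "\<dots> = c^d * (\<Sum>m\<in>exps_deg d. C i m * monom3 m x)"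
      by (simp add: sum_distrib_left algebra_simps)
    also have "\<dots> = (c ^ d *s F x) $ i" using assms unfolding polyrep_def by simp
    finally show ?thesis .
  qed
  then show ?thesis by (simp add: vec_eq_iff)
qed

lemma tendsto_monom3: "w \<longlonglongrightarrow> a \<Longrightarrow> (\<lambda>j. monom3 m (w j)) \<longlonglongrightarrow> monom3 m a"
  unfolding monom3_def by (intro tendsto_intros tendsto_vec_nth)

lemma tendsto_polyrep: assumes "polyrep d C F" "w \<longlonglongrightarrow> a" shows "(\<lambda>j. F (w j)) \<longlonglongrightarrow> F a"
proof (rule vec_tendstoI)
  fix i
  have e: "(\<lambda>j. F (w j) $ i) = (\<lambda>j. \<Sum>m\<in>exps_deg d. C i m * monom3 m (w j))"
    using assms(1) unfolding polyrep_def by simp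
  have "(\<lambda>j. \<Sum>m\<in>exps_deg d. C i m * monom3 m (w j))
      \<longlonglongrightarrow> (\<Sum>m\<in>exps_deg d. C i m * monom3 m a)"
    by (intro tendsto_intros tendsto_monom3 assms(2))
  then show "(\<lambda>j. F (w j) $ i) \<longlonglongrightarrow> F a $ i"
    unfolding e using assms(1) unfolding polyrep_def by simp
qed

lemma power_affine_deriv:
  "((\<lambda>t. (x + t * e) ^ n) has_field_derivative of_nat n * (e * x ^ (n - Suc 0))) (at (0::complex))"
proof -
  have "((\<lambda>t. x + t * e) has_field_derivative e) (at 0)" by (auto intro!: derivative_eq_intros)
  from DERIV_power[OF this, of n] show ?thesis by simp
qed

text \<open>The derivative of \<open>monom3 m\<close> along \<open>axis j 1\<close>, written out by the product rule so
  that its continuity is evident.\<close>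

definition dmonom3 :: "3 \<Rightarrow> nat \<times> nat \<times> nat \<Rightarrow> vec3 \<Rightarrow> complex" where
  "dmonom3 j m v =
    (of_nat (fst m) * (axis j 1 $ 1 * v$1 ^ (fst m - Suc 0)) * v$2 ^ fst (snd m)
      + of_nat (fst (snd m)) * (axis j 1 $ 2 * v$2 ^ (fst (snd m) - Suc 0)) * v$1 ^ fst m)
      * v$3 ^ snd (snd m)
    + of_nat (snd (snd m)) * (axis j 1 $ 3 * v$3 ^ (snd (snd m) - Suc 0))
      * (v$1 ^ fst m * v$2 ^ fst (snd m))"

lemma dmonom3_deriv:
  "((\<lambda>t. monom3 m (v + t *s axis j 1)) has_field_derivative dmonom3 j m v) (at 0)"
proof -
  have e: "(\<lambda>t. monom3 m (v + t *s axis j 1)) = (\<lambda>t. (v$1 + t * axis j 1 $ 1) ^ fst m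
     * (v$2 + t * axis j 1 $ 2) ^ fst (snd m) * (v$3 + t * axis j 1 $ 3) ^ snd (snd m))"
    unfolding monom3_def by simp
  show ?thesis unfolding e dmonom3_def
    by (rule DERIV_cong[OF DERIV_mult[OF DERIV_mult[OF power_affine_deriv power_affine_deriv]
          power_affine_deriv]]) simp
qed

lemma tendsto_dmonom3: "w \<longlonglongrightarrow> a \<Longrightarrow> (\<lambda>k. dmonom3 j m (w k)) \<longlonglongrightarrow> dmonom3 j m a"
  unfolding dmonom3_def by (intro tendsto_intros tendsto_vec_nth)

definition poly_partial ::
    "nat \<Rightarrow> (3 \<Rightarrow> nat \<times> nat \<times> nat \<Rightarrow> complex) \<Rightarrow> 3 \<Rightarrow> 3 \<Rightarrow> vec3 \<Rightarrow> complex" where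
  "poly_partial d C i j v = (\<Sum>m\<in>exps_deg d. C i m * dmonom3 j m v)"

lemma poly_partial_deriv: assumes "polyrep d C F"
  shows "((\<lambda>t. F (v + t *s axis j 1) $ i) has_field_derivative poly_partial d C i j v) (at 0)"
proof -
  have e: "(\<lambda>t. F (v + t *s axis j 1) $ i)
      = (\<lambda>t. \<Sum>m\<in>exps_deg d. C i m * monom3 m (v + t *s axis j 1))"
    using assms unfolding polyrep_def by simp
  show ?thesis unfolding e poly_partial_def
    by (intro DERIV_sum DERIV_cmult dmonom3_deriv)
qed

lemma tendsto_poly_partial:
  "w \<longlonglongrightarrow> a \<Longrightarrow> (\<lambda>k. poly_partial d C i j (w k)) \<longlonglongrightarrow> poly_partial d C i j a"
  unfolding poly_partial_def by (intro tendsto_intros tendsto_dmonom3)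

definition jac_matrix ::
    "nat \<Rightarrow> (3 \<Rightarrow> nat \<times> nat \<times> nat \<Rightarrow> complex) \<Rightarrow> vec3 \<Rightarrow> complex^3^3" where
  "jac_matrix d C v = (\<chi> i j. poly_partial d C i j v)"

lemma jac_eq_det_jac_matrix: assumes "polyrep d C F" shows "jac F v = det (jac_matrix d C v)"
  unfolding jac_def jac_matrix_def using DERIV_imp_deriv[OF poly_partial_deriv[OF assms]] by simp

lemma jac_compT: assumes "polyrep d C F" shows "jac (compT M F) v = det M * jac F v"
proof -
  have hd: "((\<lambda>t. compT M F (v + t *s axis j 1) $ i) has_field_derivative
      (\<Sum>k\<in>UNIV. M$i$k * poly_partial d C k j v)) (at 0)" for i j
  proof -
    have e: "(\<lambda>t. compT M F (v + t *s axis j 1) $ i)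
        = (\<lambda>t. \<Sum>k\<in>UNIV. M$i$k * F (v + t *s axis j 1) $ k)"
      unfolding compT_def matrix_vector_mult_def by simp
    show ?thesis unfolding e by (intro DERIV_sum DERIV_cmult poly_partial_deriv[OF assms])
  qed
  have "jac (compT M F) v = det (\<chi> i j. \<Sum>k\<in>UNIV. M$i$k * poly_partial d C k j v)"
    unfolding jac_def using DERIV_imp_deriv[OF hd] by simp
  also have "(\<chi> i j. \<Sum>k\<in>UNIV. M$i$k * poly_partial d C k j v) = M ** jac_matrix d C v"
    unfolding matrix_matrix_mult_def jac_matrix_def by simp
  finally show ?thesis using det_mul jac_eq_det_jac_matrix[OF assms] by simp
qed

lemma tendsto_det3: assumes "\<And>i j. (\<lambda>k. X k $ i $ j) \<longlonglongrightarrow> (A::complex^3^3) $ i $ j"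
  shows "(\<lambda>k. det (X k)) \<longlonglongrightarrow> det A"
  unfolding det_3 by (intro tendsto_intros assms)

lemma tendsto_jac:
  assumes "polyrep d C F" "w \<longlonglongrightarrow> a" shows "(\<lambda>k. jac F (w k)) \<longlonglongrightarrow> jac F a"
  unfolding jac_eq_det_jac_matrix[OF assms(1)]
  by (intro tendsto_det3) (simp add: jac_matrix_def tendsto_poly_partial assms(2))

lemma poly_partial_smult:
  assumes pr: "polyrep d C F" and c: "c \<noteq> 0"
  shows "poly_partial d C i j (c *s v) = (c ^ d / c) * poly_partial d C i j v"
proof -
  let ?G = "\<lambda>t. F (v + t *s axis j 1) $ i"
  have e: "(\<lambda>t. F (c *s v + t *s axis j 1) $ i) = (\<lambda>t. c ^ d * ?G (t / c))"
  proof
    fix t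
    have "c *s v + t *s axis j 1 = c *s (v + (t / c) *s axis j 1)"
      using c by (simp add: vector_add_ldistrib vector_smult_assoc)
    then show "F (c *s v + t *s axis j 1) $ i = c ^ d * ?G (t / c)"
      by (simp only: polyrep_homogeneous[OF pr] vector_smult_component)
  qed
  have "((\<lambda>t. t / c) has_field_derivative 1 / c) (at 0)"
    using c by (auto intro!: derivative_eq_intros)
  moreover have "(?G has_field_derivative poly_partial d C i j v) (at (0 / c))"
    using poly_partial_deriv[OF pr] by simp
  ultimately have "((\<lambda>t. c ^ d * ?G (t / c)) has_field_derivative
      c ^ d * (poly_partial d C i j v * (1 / c))) (at 0)"
    by (intro DERIV_cmult DERIV_chain2)
  then have "((\<lambda>t. F (c *s v + t *s axis j 1) $ i) has_field_derivative
      c ^ d * (poly_partial d C i j v * (1 / c))) (at 0)"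
    unfolding e .
  from DERIV_unique[OF poly_partial_deriv[OF pr] this] show ?thesis by simp
qed

lemma jac_smult:
  assumes "polyrep d C F" "c \<noteq> 0"
  shows "jac F (c *s v) = (c ^ d / c) ^ 3 * jac F v"
proof -
  have "jac_matrix d C (c *s v) = (\<chi> i. (c ^ d / c) *s (\<chi> j. poly_partial d C i j v))"
    unfolding jac_matrix_def poly_partial_smult[OF assms] by (simp add: vec_eq_iff)
  then have "det (jac_matrix d C (c *s v)) = (\<Prod>i\<in>(UNIV::3 set). c ^ d / c) * det (jac_matrix d C v)"
    unfolding jac_matrix_def by (simp add: det_rows_mul)
  then show ?thesis unfolding jac_eq_det_jac_matrix[OF assms(1)] by simp
qed

lemma jac_smult_eq_0_iff:
  assumes "polyrep d C F" "c \<noteq> 0" shows "jac F (c *s v) = 0 \<longleftrightarrow> jac F v = 0"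
  using jac_smult[OF assms] assms(2) by simp

lemma mem_indet_iff: assumes "polyrep d C F" shows "p \<in> indet F \<longleftrightarrow> F (rep p) = 0"
proof
  assume "p \<in> indet F"
  then obtain v where v: "p = proj v" "v \<noteq> 0" "F v = 0" unfolding indet_def by blast
  obtain c where c: "c \<noteq> 0" "v = c *s rep p"
    using eq_smult_rep_if_proj_eq[OF v(2) v(1)[symmetric]] by blast
  have "c ^ d *s F (rep p) = 0" using v(3) c(2) polyrep_homogeneous[OF assms] by simp
  then show "F (rep p) = 0" using c(1) by simp
next
  assume "F (rep p) = 0"
  then show "p \<in> indet F" unfolding indet_def by (intro CollectI exI[of _ "rep p"]) simp
qed

lemma fmap_eq_proj:
  assumes "polyrep d C F" "w \<noteq> 0" "proj w = p" shows "fmap F p = proj (F w)"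
proof -
  obtain c where c: "c \<noteq> 0" "w = c *s rep p" using eq_smult_rep_if_proj_eq[OF assms(2,3)] by blast
  have "F w = c ^ d *s F (rep p)" using c(2) polyrep_homogeneous[OF assms(1)] by simp
  then show ?thesis unfolding fmap_def using proj_smult c(1) by simp
qed

lemma polyrep_eq_0_iff_rep:
  assumes "polyrep d C F" "w \<noteq> 0" "proj w = p" shows "F w = 0 \<longleftrightarrow> F (rep p) = 0"
proof -
  obtain c where c: "c \<noteq> 0" "w = c *s rep p" using eq_smult_rep_if_proj_eq[OF assms(2,3)] by blast
  have "F w = c ^ d *s F (rep p)" using c(2) polyrep_homogeneous[OF assms(1)] by simp
  then show ?thesis using c(1) by simp
qed

lemma fmap_fs_conv:
  assumes pr: "polyrep d C F" and sI: "\<And>j. s j \<notin> indet F"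
    and conv: "fs_conv s p" and pI: "p \<notin> indet F"
  shows "fs_conv (\<lambda>j. fmap F (s j)) (fmap F p)"
proof -
  obtain w where w: "\<forall>j. w j \<noteq> 0" "\<forall>j. proj (w j) = s j" "w \<longlonglongrightarrow> rep p"
    using fs_conv_lift_reps[OF conv] by blast
  have e: "fmap F (s j) = proj (F (w j))" for j using fmap_eq_proj[OF pr] w by blast
  have nz: "F (w j) \<noteq> 0" for j using polyrep_eq_0_iff_rep[OF pr] w sI mem_indet_iff[OF pr] by blast
  have nz0: "F (rep p) \<noteq> 0" using pI mem_indet_iff[OF pr] by blast
  have "fs_conv (\<lambda>j. proj (F (w j))) (proj (F (rep p)))"
    by (rule fs_conv_proj[OF nz tendsto_polyrep[OF pr w(3)] nz0])
  then show ?thesis by (simp only: e fmap_def[of F p])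
qed

lemma invertible_mult_vec_eq_0_iff: assumes "invertible M" shows "M *v x = 0 \<longleftrightarrow> x = 0"
proof
  assume "M *v x = 0"
  obtain N where "N ** M = mat 1" using assms unfolding invertible_def by blast
  then have "N *v (M *v x) = x" by (simp add: matrix_vector_mul_assoc)
  then show "x = 0" using \<open>M *v x = 0\<close> by simp
qed simp

lemma indet_compT: assumes "invertible M" shows "indet (compT M F) = indet F"
  unfolding indet_def compT_def using invertible_mult_vec_eq_0_iff[OF assms] by simp

lemma matrix_vector_mult_smult: "M *v (c *s x) = (c::complex) *s (M *v x)"
  by (simp add: vec_eq_iff matrix_vector_mult_def sum_distrib_left algebra_simps)

lemma fmap_compT: assumes "F (rep p) \<noteq> 0" shows "fmap (compT M F) p = autP M (fmap F p)"
proof -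
  obtain c where c: "c \<noteq> 0" "rep (proj (F (rep p))) = c *s F (rep p)"
    using rep_proj_smult[OF assms] by blast
  show ?thesis
    unfolding autP_def fmap_def compT_def c(2) matrix_vector_mult_smult
    using proj_smult c(1) by simp
qed

subsection \<open>Behaviour away from the fibre of \<open>p\<^sub>0\<close>\<close>

lemma fs_conv_fibre_limit:
  assumes pr: "polyrep d C F" and p0: "p0 \<notin> img_indet F"
    and sI: "\<And>j. s j \<notin> indet F" and conv: "fs_conv s s0"
    and fconv: "fs_conv (\<lambda>j. fmap F (s j)) p0"
  shows "s0 \<in> preim F p0"
proof -
  have s0I: "s0 \<notin> indet F"
  proof
    assume "s0 \<in> indet F"
    then have "p0 \<in> img_indet F" unfolding img_indet_def limset_def using sI conv fconv by blast
    then show False using p0 by simp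
  qed
  then have "fmap F s0 = p0" using fs_conv_unique[OF fmap_fs_conv[OF pr sI conv] fconv] by simp
  then show ?thesis unfolding preim_def using s0I by simp
qed

lemma near_image_imp_near_fibre:
  assumes pr: "polyrep d C F" and p0: "p0 \<notin> img_indet F" and r: "r > 0"
  shows "\<exists>\<eta>>0. \<forall>s. s \<notin> indet F \<and> fs_dist (fmap F s) p0 < \<eta> \<longrightarrow> s \<in> fs_ball (preim F p0) r"
proof (rule ccontr)
  let ?V = "fs_ball (preim F p0) r"
  assume "\<not> ?thesis"
  then have "\<forall>n. \<exists>s. s \<notin> indet F \<and> fs_dist (fmap F s) p0 < inverse (real (Suc n)) \<and> s \<notin> ?V"
    by (metis inverse_positive_iff_positive of_nat_0_less_iff zero_less_Suc)
  then obtain s where sI: "\<And>n. s n \<notin> indet F"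
    and close: "\<And>n. fs_dist (fmap F (s n)) p0 < inverse (real (Suc n))" and far: "\<And>n. s n \<notin> ?V"
    by metis
  obtain \<sigma> s0 where \<sigma>: "strict_mono \<sigma>" "fs_conv (s \<circ> \<sigma>) s0" using fs_seq_compact by blast
  have "fs_conv ((\<lambda>n. fmap F (s n)) \<circ> \<sigma>) p0"
    using fs_conv_subseq[OF fs_conv_if_dist_lt_inverse[OF close] \<sigma>(1)] .
  then have "s0 \<in> preim F p0"
    using fs_conv_fibre_limit[OF pr p0 _ \<sigma>(2)] sI by (simp add: o_def)
  then have "s0 \<in> ?V" using fs_ball_memI r by blast
  then show False using fs_conv_eventually_in_fs_ball[OF _ \<sigma>(2)] far by fastforce
qed

lemma Tset_invertible: "M \<in> Tset A v0 \<delta> \<Longrightarrow> invertible M"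
  unfolding Tset_def by blast

lemma Tset_maps_far_point_near_pline:
  assumes A_ker: "\<forall>w. A *v w = 0 \<longleftrightarrow> (\<exists>c. w = c *s v0)"
    and A_img: "range (\<lambda>w. A *v w) = {w. (\<Sum>i\<in>UNIV. a $ i * w $ i) = 0}"
    and M: "M \<in> Tset A v0 \<delta>" and \<delta>: "\<delta> > 0" and far: "\<delta> \<le> fs_dist q (proj v0)"
  shows "\<exists>x\<in>pline a. fs_dist (autP M q) x < \<delta>"
proof -
  have "A *v rep q \<noteq> 0"
  proof
    assume "A *v rep q = 0"
    then obtain c where c: "rep q = c *s v0" using A_ker by blast
    then have "c \<noteq> 0" using rep_nonzero[of q] by auto
    then have "q = proj v0" using proj_smult[of c v0] c proj_rep[of q] by simp
    then show False using far \<delta> by simp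
  qed
  then obtain c where rep_eq: "rep (proj (A *v rep q)) = c *s (A *v rep q)"
    using rep_proj_smult by blast
  have "(\<Sum>i\<in>UNIV. a $ i * (A *v rep q) $ i) = 0" using A_img by blast
  then have "proj (A *v rep q) \<in> pline a"
    unfolding pline_def mem_Collect_eq rep_eq
    by (simp add: mult.left_commute flip: sum_distrib_left)
  moreover have "fs_dist (autP M q) (proj (A *v rep q)) < \<delta>"
    using M far unfolding Tset_def by blast
  ultimately show ?thesis by blast
qed

text \<open>A point away from the fibre is mapped by \<open>f\<close> a definite distance \<open>\<eta>\<close> away from
  \<open>p\<^sub>0\<close>; an automorphism \<open>\<delta>\<close>-close to \<open>T\<^sub>0\<close> with \<open>\<delta> \<le> \<eta>\<close> then moves it \<open>\<delta>\<close>-close to \<open>L\<^sub>0\<close>.\<close>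

lemma compT_maps_off_fibre_near_pline:
  assumes pr: "polyrep d C F" and p0: "proj v0 \<notin> img_indet F"
    and A_ker: "\<forall>w. A *v w = 0 \<longleftrightarrow> (\<exists>c. w = c *s v0)"
    and A_img: "range (\<lambda>w. A *v w) = {w. (\<Sum>i\<in>UNIV. a $ i * w $ i) = 0}"
    and r: "r > 0"
  shows "\<exists>\<delta>>0. \<forall>M\<in>Tset A v0 \<delta>. \<forall>p. p \<notin> indet F \<and> p \<notin> fs_ball (preim F (proj v0)) r \<longrightarrow>
           fmap (compT M F) p \<in> fs_ball (pline a) r"
proof -
  obtain \<eta> where \<eta>: "\<eta> > 0"
    and near: "\<And>s. s \<notin> indet F \<Longrightarrow> fs_dist (fmap F s) (proj v0) < \<eta> \<Longrightarrow>
                 s \<in> fs_ball (preim F (proj v0)) r"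
    using near_image_imp_near_fibre[OF pr p0 r] by blast
  define \<delta> where "\<delta> = min \<eta> r"
  have \<delta>: "\<delta> > 0" "\<delta> \<le> \<eta>" "\<delta> \<le> r" unfolding \<delta>_def using \<eta> r by auto
  have "fmap (compT M F) p \<in> fs_ball (pline a) r"
    if M: "M \<in> Tset A v0 \<delta>" and pI: "p \<notin> indet F" and pV: "p \<notin> fs_ball (preim F (proj v0)) r"
    for M p
  proof -
    have "\<delta> \<le> fs_dist (fmap F p) (proj v0)" using near[OF pI] pV \<delta>(2) by force
    then obtain x where "x \<in> pline a" "fs_dist (autP M (fmap F p)) x < \<delta>"
      using Tset_maps_far_point_near_pline[OF A_ker A_img M \<delta>(1)] by blast
    moreover have "fmap (compT M F) p = autP M (fmap F p)"
      using pI mem_indet_iff[OF pr] fmap_compT by blast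
    ultimately show ?thesis unfolding fs_ball_def using \<delta>(3) by force
  qed
  then show ?thesis using \<delta>(1) by blast
qed

text \<open>Points within \<open>r/2\<close> of an indeterminacy point lie outside \<open>B\<^sub>r\<^sub>/\<^sub>2(P)\<close>, since
  \<open>B\<^sub>r(P)\<close> misses the indeterminacy set.\<close>

lemma img_indet_subset_fs_ball:
  assumes r: "r > 0" and PI: "fs_ball P r \<inter> indet G = {}"
    and maps: "\<And>p. p \<notin> indet G \<Longrightarrow> p \<notin> fs_ball P (r/2) \<Longrightarrow> fmap G p \<in> fs_ball L (r/2)"
  shows "img_indet G \<subseteq> fs_ball L r"
proof
  fix q assume "q \<in> img_indet G"
  then obtain p s where pI: "p \<in> indet G" and sI: "\<And>j. s j \<notin> indet G"
    and conv: "fs_conv s p" and fconv: "fs_conv (\<lambda>j. fmap G (s j)) q"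
    unfolding img_indet_def limset_def by blast
  have r2: "r/2 > 0" using r by simp
  obtain N1 where N1: "\<forall>n\<ge>N1. fs_dist (s n) p < r/2"
    using fs_conv_eventually_lt[OF conv r2] by blast
  obtain N2 where N2: "\<forall>n\<ge>N2. fs_dist (fmap G (s n)) q < r/2"
    using fs_conv_eventually_lt[OF fconv r2] by blast
  define n where "n = max N1 N2"
  have "s n \<notin> fs_ball P (r/2)"
  proof
    assume "s n \<in> fs_ball P (r/2)"
    then obtain x where x: "x \<in> P" "fs_dist (s n) x < r/2" unfolding fs_ball_def by blast
    have "fs_dist (s n) p < r/2" using N1 n_def by simp
    then have "fs_dist p x < r"
      using x(2) fs_dist_triangle[of p x "s n"] fs_dist_sym[of p "s n"] by linarith
    then have "p \<in> fs_ball P r" using x(1) unfolding fs_ball_def by blast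
    then show False using PI pI by blast
  qed
  then obtain x where x: "x \<in> L" "fs_dist (fmap G (s n)) x < r/2"
    using maps[OF sI] unfolding fs_ball_def by blast
  have "fs_dist (fmap G (s n)) q < r/2" using N2 n_def by simp
  then have "fs_dist q x < r"
    using x(2) fs_dist_triangle[of q x "fmap G (s n)"] fs_dist_sym[of q "fmap G (s n)"] by linarith
  then show "q \<in> fs_ball L r" using x(1) unfolding fs_ball_def by blast
qed

subsection \<open>Ergodic invariant measures\<close>

lemma fs_open_in_fs_borel: "fs_open U \<Longrightarrow> U \<in> sets fs_borel"
  unfolding fs_borel_def by (subst sets_measure_of) auto

lemma erg_inv_forward_invariant_trivial:
  assumes erg: "erg_inv G \<mu>" and U: "U \<in> sets \<mu>"
    and fwd: "U \<subseteq> {p. p \<notin> indet G \<and> fmap G p \<in> U}"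
  shows "emeasure \<mu> U = 0 \<or> emeasure \<mu> U = 1"
proof -
  let ?P = "{p. p \<notin> indet G \<and> fmap G p \<in> U}"
  have ps: "prob_space \<mu>" and P: "?P \<in> sets \<mu>" and PU: "emeasure \<mu> ?P = emeasure \<mu> U"
    using erg U unfolding erg_inv_def by blast+
  have fin: "emeasure \<mu> U \<noteq> \<infinity>"
    using ps prob_space.emeasure_le_1[of \<mu> U] by (auto simp: top_unique)
  have "emeasure \<mu> (?P - U) = emeasure \<mu> ?P - emeasure \<mu> U"
    by (rule emeasure_Diff[OF fin P U fwd])
  also have "\<dots> = 0" unfolding PU using fin by (simp add: ennreal_diff_self)
  finally have "emeasure \<mu> ((?P - U) \<union> (U - ?P)) = 0"
    using fwd by (simp add: Diff_eq_empty_iff[THEN iffD2])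
  then show ?thesis using erg U unfolding erg_inv_def by blast
qed

text \<open>\<open>U\<close> is forward invariant, hence of measure \<open>0\<close> or \<open>1\<close>; in the first case almost every
  point lies in \<open>V\<close>.\<close>

lemma erg_inv_dichotomy:
  assumes erg: "erg_inv G \<mu>" and U: "fs_open U" and V: "fs_open V"
    and UI: "U \<inter> indet G = {}" and UV: "U \<inter> V = {}"
    and fwd: "\<And>p. p \<notin> V \<Longrightarrow> p \<notin> indet G \<Longrightarrow> fmap G p \<in> U"
  shows "emeasure \<mu> U = 1 \<or> emeasure \<mu> V = 1"
proof -
  let ?P = "{p. p \<notin> indet G \<and> fmap G p \<in> U}"
  have ps: "prob_space \<mu>" and sets_eq: "sets \<mu> = sets fs_borel" and I: "indet G \<in> sets \<mu>"
    and I0: "emeasure \<mu> (indet G) = 0"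
    using erg unfolding erg_inv_def by blast+
  have US: "U \<in> sets \<mu>" and VS: "V \<in> sets \<mu>"
    using fs_open_in_fs_borel U V sets_eq by auto
  have P: "?P \<in> sets \<mu>" and PU: "emeasure \<mu> ?P = emeasure \<mu> U"
    using erg US unfolding erg_inv_def by blast+
  have "emeasure \<mu> U = 0 \<or> emeasure \<mu> U = 1"
    using erg_inv_forward_invariant_trivial[OF erg US] UI UV fwd by blast
  moreover have "emeasure \<mu> V = 1" if U0: "emeasure \<mu> U = 0"
  proof -
    have "emeasure \<mu> (?P \<union> indet G) \<le> emeasure \<mu> ?P + emeasure \<mu> (indet G)"
      by (rule emeasure_subadditive[OF P I])
    then have "?P \<union> indet G \<in> null_sets \<mu>" using PU U0 I0 P I by (intro null_setsI) auto
    moreover have "{p \<in> space \<mu>. p \<notin> V} \<subseteq> ?P \<union> indet G" using fwd by blast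
    ultimately have "AE p in \<mu>. p \<in> V" by (rule AE_I')
    then show ?thesis by (rule prob_space.emeasure_eq_1_AE[OF ps VS])
  qed
  ultimately show ?thesis by blast
qed

subsection \<open>Regular points near the fibre\<close>

lemma jac_nonzero_near:
  assumes pr: "polyrep d C F" and jx: "jac F (rep x) \<noteq> 0"
  shows "\<exists>r>0. \<forall>p. fs_dist p x < r \<longrightarrow> jac F (rep p) \<noteq> 0"
proof (rule ccontr)
  assume "\<not> ?thesis"
  then have "\<forall>n. \<exists>p. fs_dist p x < inverse (real (Suc n)) \<and> jac F (rep p) = 0"
    by (metis inverse_positive_iff_positive of_nat_0_less_iff zero_less_Suc)
  then obtain p where p: "\<And>n. fs_dist (p n) x < inverse (real (Suc n))" "\<And>n. jac F (rep (p n)) = 0"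
    by metis
  obtain w where w: "\<forall>j. w j \<noteq> 0" "\<forall>j. proj (w j) = p j" "w \<longlonglongrightarrow> rep x"
    using fs_conv_lift_reps[OF fs_conv_if_dist_lt_inverse[OF p(1)]] by blast
  have jw: "jac F (w j) = 0" for j
  proof -
    obtain c where c: "c \<noteq> 0" "w j = c *s rep (p j)" using eq_smult_rep_if_proj_eq w by blast
    show ?thesis unfolding c(2) jac_smult_eq_0_iff[OF pr c(1)] by (rule p(2))
  qed
  have "(\<lambda>j. jac F (w j)) \<longlonglongrightarrow> jac F (rep x)" by (rule tendsto_jac[OF pr w(3)])
  then have "jac F (rep x) = 0" unfolding jw using LIMSEQ_unique tendsto_const by blast
  then show False using jx by simp
qed

lemma jac_nonzero_on_fs_ball_fibre:
  assumes pr: "polyrep d C F" and rv: "regular_value F q" and fin: "finite (preim F q)"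
  shows "\<exists>r>0. \<forall>p\<in>fs_ball (preim F q) r. jac F (rep p) \<noteq> 0"
proof -
  have "\<forall>x\<in>preim F q. \<exists>r>0. \<forall>p. fs_dist p x < r \<longrightarrow> jac F (rep p) \<noteq> 0"
    using rv jac_nonzero_near[OF pr] unfolding regular_value_def regular_pt_def by blast
  then obtain R where R: "\<And>x. x \<in> preim F q \<Longrightarrow> R x > 0"
    and RJ: "\<And>x p. x \<in> preim F q \<Longrightarrow> fs_dist p x < R x \<Longrightarrow> jac F (rep p) \<noteq> 0"
    by metis
  define r where "r = Min (insert 1 (R ` preim F q))"
  have "r > 0" unfolding r_def using fin R by (subst Min_gr_iff) auto
  moreover have "r \<le> R x" if "x \<in> preim F q" for x unfolding r_def using fin that by simp
  ultimately show ?thesis unfolding fs_ball_def using RJ by force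
qed

lemma regular_pt_compT:
  assumes pr: "polyrep d C F" and M: "invertible M"
    and "p \<notin> indet F" and "jac F (rep p) \<noteq> 0"
  shows "regular_pt (compT M F) p"
  using assms jac_compT[OF pr] invertible_det_nz[of M] indet_compT[OF M]
  unfolding regular_pt_def by simp

lemma critical_values_subset:
  assumes "\<And>p. p \<notin> indet G \<Longrightarrow> fmap G p \<notin> U \<Longrightarrow> p \<in> V" and "\<And>p. p \<in> V \<Longrightarrow> regular_pt G p"
  shows "critical_values G \<subseteq> U"
  unfolding critical_values_def using assms by blast

text \<open>Conclusions (i)--(iv) for \<open>f\<^sub>T\<close> with \<open>T = [M]\<close>, \<open>U = B\<^sub>\<epsilon>(L\<^sub>0)\<close> and
  \<open>V = B\<^sub>\<epsilon>(f\<^sup>-\<^sup>1(p\<^sub>0))\<close>.\<close>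

definition separates_dynamics :: "(vec3 \<Rightarrow> vec3) \<Rightarrow> complex^3^3 \<Rightarrow> P2 set \<Rightarrow> P2 set \<Rightarrow> bool" where
  "separates_dynamics F M U V \<longleftrightarrow>
     (\<forall>p. p \<notin> V \<and> p \<notin> indet F \<longrightarrow> fmap (compT M F) p \<in> U) \<and>
     (\<forall>p. p \<notin> indet (compT M F) \<and> fmap (compT M F) p \<notin> U \<longrightarrow> p \<in> V) \<and>
     img_indet (compT M F) \<subseteq> U \<and>
     (\<forall>\<mu>. erg_inv (compT M F) \<mu> \<longrightarrow> emeasure \<mu> U = 1 \<or> emeasure \<mu> V = 1)"

lemma separates_dynamics_near_T0:
  assumes pr: "polyrep d C F" and p0: "proj v0 \<notin> img_indet F"
    and A_ker: "\<forall>w. A *v w = 0 \<longleftrightarrow> (\<exists>c. w = c *s v0)"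
    and A_img: "range (\<lambda>w. A *v w) = {w. (\<Sum>i\<in>UNIV. a $ i * w $ i) = 0}"
    and \<epsilon>: "\<epsilon> > 0"
    and UV: "fs_ball (pline a) \<epsilon> \<inter> fs_ball (preim F (proj v0)) \<epsilon> = {}"
    and UI: "fs_ball (pline a) \<epsilon> \<inter> indet F = {}"
    and VI: "fs_ball (preim F (proj v0)) \<epsilon> \<inter> indet F = {}"
  shows "\<exists>\<delta>>0. \<forall>M\<in>Tset A v0 \<delta>.
           separates_dynamics F M (fs_ball (pline a) \<epsilon>) (fs_ball (preim F (proj v0)) \<epsilon>)"
proof -
  let ?U = "fs_ball (pline a)" and ?V = "fs_ball (preim F (proj v0))"
  obtain \<delta> where \<delta>: "\<delta> > 0" and maps: "\<And>M p. M \<in> Tset A v0 \<delta> \<Longrightarrow> p \<notin> indet F \<Longrightarrow>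
      p \<notin> ?V (\<epsilon>/2) \<Longrightarrow> fmap (compT M F) p \<in> ?U (\<epsilon>/2)"
    using compT_maps_off_fibre_near_pline[OF pr p0 A_ker A_img, of "\<epsilon>/2"] \<epsilon> by auto
  have "separates_dynamics F M (?U \<epsilon>) (?V \<epsilon>)" if M: "M \<in> Tset A v0 \<delta>" for M
  proof -
    have IC: "indet (compT M F) = indet F" by (rule indet_compT[OF Tset_invertible[OF M]])
    have fwd: "fmap (compT M F) p \<in> ?U \<epsilon>" if "p \<notin> ?V \<epsilon>" "p \<notin> indet F" for p
      using maps[OF M] that fs_ball_mono[of "\<epsilon>/2" \<epsilon>] \<epsilon> by auto
    have "img_indet (compT M F) \<subseteq> ?U \<epsilon>"
      by (rule img_indet_subset_fs_ball[OF \<epsilon>]) (use VI maps[OF M] IC in auto)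
    moreover have "emeasure \<mu> (?U \<epsilon>) = 1 \<or> emeasure \<mu> (?V \<epsilon>) = 1"
      if "erg_inv (compT M F) \<mu>" for \<mu>
      by (rule erg_inv_dichotomy[OF that fs_open_fs_ball fs_open_fs_ball])
        (use UI UV fwd IC in auto)
    ultimately show ?thesis unfolding separates_dynamics_def using fwd IC by blast
  qed
  then show ?thesis using \<delta> by blast
qed

lemma separates_dynamics_regular:
  assumes pr: "polyrep d C F" and dyn: "\<forall>M\<in>Tset A v0 \<delta>. separates_dynamics F M U V"
    and VI: "V \<inter> indet F = {}" and jac: "\<forall>p\<in>V. jac F (rep p) \<noteq> 0"
  shows "\<forall>M\<in>Tset A v0 \<delta>. separates_dynamics F M U V \<and>
           (\<forall>p\<in>V. regular_pt (compT M F) p) \<and> critical_values (compT M F) \<subseteq> U"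
proof
  fix M assume M: "M \<in> Tset A v0 \<delta>"
  have "regular_pt (compT M F) p" if "p \<in> V" for p
    using regular_pt_compT[OF pr Tset_invertible[OF M]] that VI jac by blast
  then show "separates_dynamics F M U V \<and> (\<forall>p\<in>V. regular_pt (compT M F) p) \<and>
      critical_values (compT M F) \<subseteq> U"
    using critical_values_subset[of "compT M F" U V] dyn M unfolding separates_dynamics_def by blast
qed

theorem mainTheorem3:
  fixes F :: "vec3 \<Rightarrow> vec3" and a v0 :: vec3 and A :: "complex^3^3"
  assumes rat: "rat_map F" and dom: "dominant F"
    and a_nz: "a \<noteq> 0" and v0_nz: "v0 \<noteq> 0"
    and p0_notin_L0: "proj v0 \<notin> pline a"
    and A_ker: "\<forall>w. A *v w = 0 \<longleftrightarrow> (\<exists>c. w = c *s v0)"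
    and A_img: "range (\<lambda>w. A *v w) = {w. (\<Sum>i\<in>UNIV. a $ i * w $ i) = 0}"
    and condA: "proj v0 \<notin> img_indet F \<union> img_curve F (pline a)"
    and condB: "pline a \<inter> indet F = {}"
  shows
   "(\<forall>\<epsilon>>0.
      fs_ball (pline a) \<epsilon> \<inter> fs_ball (preim F (proj v0)) \<epsilon> = {} \<and>
      fs_ball (pline a) \<epsilon> \<inter> indet F = {} \<and>
      fs_ball (preim F (proj v0)) \<epsilon> \<inter> indet F = {} \<longrightarrow>
      (\<exists>\<delta>>0. \<forall>M\<in>Tset A v0 \<delta>.
         (\<forall>p. p \<notin> fs_ball (preim F (proj v0)) \<epsilon> \<and> p \<notin> indet F \<longrightarrow>
              fmap (compT M F) p \<in> fs_ball (pline a) \<epsilon>) \<and>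
         (\<forall>p. p \<notin> indet (compT M F) \<and> fmap (compT M F) p \<notin> fs_ball (pline a) \<epsilon> \<longrightarrow>
              p \<in> fs_ball (preim F (proj v0)) \<epsilon>) \<and>
         img_indet (compT M F) \<subseteq> fs_ball (pline a) \<epsilon> \<and>
         (\<forall>\<mu>. erg_inv (compT M F) \<mu> \<longrightarrow>
              emeasure \<mu> (fs_ball (pline a) \<epsilon>) = 1 \<or>
              emeasure \<mu> (fs_ball (preim F (proj v0)) \<epsilon>) = 1))) \<and>
   (regular_value F (proj v0) \<and> finite (preim F (proj v0)) \<and>
      card (preim F (proj v0)) = top_degree F \<longrightarrow>
    (\<exists>\<epsilon>\<^sub>1>0. \<forall>\<epsilon>. 0 < \<epsilon> \<and> \<epsilon> < \<epsilon>\<^sub>1 \<and>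
      fs_ball (pline a) \<epsilon> \<inter> fs_ball (preim F (proj v0)) \<epsilon> = {} \<and>
      fs_ball (pline a) \<epsilon> \<inter> indet F = {} \<and>
      fs_ball (preim F (proj v0)) \<epsilon> \<inter> indet F = {} \<longrightarrow>
      (\<exists>\<delta>>0. \<forall>M\<in>Tset A v0 \<delta>.
         (\<forall>p. p \<notin> fs_ball (preim F (proj v0)) \<epsilon> \<and> p \<notin> indet F \<longrightarrow>
              fmap (compT M F) p \<in> fs_ball (pline a) \<epsilon>) \<and>
         (\<forall>p. p \<notin> indet (compT M F) \<and> fmap (compT M F) p \<notin> fs_ball (pline a) \<epsilon> \<longrightarrow>
              p \<in> fs_ball (preim F (proj v0)) \<epsilon>) \<and>
         img_indet (compT M F) \<subseteq> fs_ball (pline a) \<epsilon> \<and>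
         (\<forall>\<mu>. erg_inv (compT M F) \<mu> \<longrightarrow>
              emeasure \<mu> (fs_ball (pline a) \<epsilon>) = 1 \<or>
              emeasure \<mu> (fs_ball (preim F (proj v0)) \<epsilon>) = 1) \<and>
         (\<forall>p\<in>fs_ball (preim F (proj v0)) \<epsilon>. regular_pt (compT M F) p) \<and>
         critical_values (compT M F) \<subseteq> fs_ball (pline a) \<epsilon>)))"
proof -
  obtain d C where pr: "polyrep d C F" using polyrep_of_rat_map[OF rat] by blast
  have p0: "proj v0 \<notin> img_indet F" using condA by simp
  define U where "U \<epsilon> = fs_ball (pline a) \<epsilon>" for \<epsilon>
  define V where "V \<epsilon> = fs_ball (preim F (proj v0)) \<epsilon>" for \<epsilon>
  define separated where
    "separated \<epsilon> \<longleftrightarrow> U \<epsilon> \<inter> V \<epsilon> = {} \<and> U \<epsilon> \<inter> indet F = {} \<and> V \<epsilon> \<inter> indet F = {}" for \<epsilon>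
  have part1: "\<forall>\<epsilon>>0. separated \<epsilon> \<longrightarrow>
      (\<exists>\<delta>>0. \<forall>M\<in>Tset A v0 \<delta>. separates_dynamics F M (U \<epsilon>) (V \<epsilon>))"
    using separates_dynamics_near_T0[OF pr p0 A_ker A_img]
    unfolding separated_def U_def V_def by blast
  have part2: "\<exists>\<epsilon>\<^sub>1>0. \<forall>\<epsilon>. 0 < \<epsilon> \<and> \<epsilon> < \<epsilon>\<^sub>1 \<and> separated \<epsilon> \<longrightarrow>
      (\<exists>\<delta>>0. \<forall>M\<in>Tset A v0 \<delta>. separates_dynamics F M (U \<epsilon>) (V \<epsilon>) \<and>
        (\<forall>p\<in>V \<epsilon>. regular_pt (compT M F) p) \<and> critical_values (compT M F) \<subseteq> U \<epsilon>)"
    if rv: "regular_value F (proj v0)" and fin: "finite (preim F (proj v0))"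
  proof -
    obtain \<epsilon>\<^sub>1 where "\<epsilon>\<^sub>1 > 0" and jac: "\<forall>p\<in>V \<epsilon>\<^sub>1. jac F (rep p) \<noteq> 0"
      using jac_nonzero_on_fs_ball_fibre[OF pr rv fin] unfolding V_def by blast
    have "\<exists>\<delta>>0. \<forall>M\<in>Tset A v0 \<delta>. separates_dynamics F M (U \<epsilon>) (V \<epsilon>) \<and>
        (\<forall>p\<in>V \<epsilon>. regular_pt (compT M F) p) \<and> critical_values (compT M F) \<subseteq> U \<epsilon>"
      if \<epsilon>: "0 < \<epsilon>" "\<epsilon> < \<epsilon>\<^sub>1" and sep: "separated \<epsilon>" for \<epsilon>
    proof -
      obtain \<delta> where "\<delta> > 0" "\<forall>M\<in>Tset A v0 \<delta>. separates_dynamics F M (U \<epsilon>) (V \<epsilon>)"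
        using part1 \<epsilon>(1) sep by blast
      moreover have "V \<epsilon> \<inter> indet F = {}" "\<forall>p\<in>V \<epsilon>. jac F (rep p) \<noteq> 0"
        using sep jac fs_ball_mono[of \<epsilon> \<epsilon>\<^sub>1] \<epsilon>(2) unfolding separated_def V_def by auto
      ultimately show ?thesis using separates_dynamics_regular[OF pr] by blast
    qed
    then show ?thesis using \<open>\<epsilon>\<^sub>1 > 0\<close> by blast
  qed
  show ?thesis
    using part1 part2 unfolding separates_dynamics_def separated_def U_def V_def conj_assoc by blast
qed

end
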